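(* Let $\mathbf{c}=\{c_n\}_{n=-\infty}^{\infty}$ be a complex sequence such that, for some $\theta_0\in[0,\pi/2)$, $$c_n\pm c_{-n}\in K(\theta_0),\qquad n=1,2,\dots.$$ Suppose there exist a natural number $N_0$ and a constant $M(\mathbf c)>0$ such that $$\sum_{n=m}^{2m}|c_n-c_{n+1}|\le M(\mathbf c)\max_{m\le n<m+N_0}|c_n|\qquad\text{for all } m=1,2,\dots.$$ Let $f(x)=\sum_{k=-\infty}^{\infty}c_k e^{ikx}:=\lim_{n\to\infty}\sum_{k=-n}^{n}c_ke^{ikx}$ at every point $x$ where this limit exists, and $S_n(f,x)=\sum_{k=-n}^{n}c_ke^{ikx}$. Then ($f\in C_{2\pi}$ and $\lim_{n\to\infty}\|f-S_n(f)\|=0$) holds if and only if both $$\lim_{n\to\infty}nc_n=0\qquad\text{and}\qquad\sum_{n=1}^{\infty}|c_n+c_{-n}|<\infty.$$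
   Context: For $\theta\in[0,\pi/2]$, $K(\theta)=\{z\in\mathbb C: |\arg z|\le\theta\}$. $C_{2\pi}$ is the space of complex-valued continuous $2\pi$-periodic functions on $\mathbb R$ with norm $\|g\|=\max_{x\in\mathbb R}|g(x)|$. *)

theory Defs
  imports "HOL-Analysis.Analysis"
begin

text \<open>The closed sector K(theta) = {z : |arg z| <= theta}; Arg 0 = 0, so 0 belongs to it.\<close>
definition sector :: "real \<Rightarrow> complex set" where
  "sector \<theta> = {z. \<bar>Arg z\<bar> \<le> \<theta>}"

definition partial_sum :: "(int \<Rightarrow> complex) \<Rightarrow> nat \<Rightarrow> real \<Rightarrow> complex" where
  "partial_sum c n x = (\<Sum>k = - int n..int n. c k * exp (\<i> * of_int k * of_real x))"

text \<open>The pointwise sum f(x) = lim_n S_n(f,x) (meaningful where the limit exists).\<close>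
definition series_fun :: "(int \<Rightarrow> complex) \<Rightarrow> real \<Rightarrow> complex" where
  "series_fun c x = lim (\<lambda>n. partial_sum c n x)"

end

theory Submission
  imports Defs
begin

(* Write a_k = c_k + c_{-k} and b_k = c_k - c_{-k}.  Then
     S_n(f,x) = c_0 + sum_{k=1}^n a_k e^{-ikx} + 2i sum_{k=1}^n c_k sin kx,
     S_n(f,x) - S_n(f,-x) = 2i sum_{k=1}^n b_k sin kx.
   Sufficiency: the first series converges uniformly since sum |a_k| < oo.  A tail of the sine
   series is split at p ~ 1/|sin(x/2)|: below p, |sin kx| <= 2k |sin(x/2)| and k c_k -> 0 make it
   small; above p, Abel summation against the bounded sums sum_{j<k} sin jx leaves |c_p|, |c_q| and
   the variation of c beyond p, which the GBV condition bounds by 2M sup_{k>=p} k |c_k| / p.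
   Necessity: at x = 0 the partial sums are c_0 + sum a_k, and Re a_k >= cos theta0 |a_k| makes
   this convergence absolute.  At x = pi/(4m) every sin kx with m <= k <= 2m is >= 1/2, so the
   sector condition turns the uniform Cauchy property of S_n(f,x) - S_n(f,-x) into
   sum_{k=m}^{2m} |b_k| -> 0.  Hence sum_{k=m}^{2m} |c_k| -> 0, and averaging the GBV estimate
   |c_k| <= |c_j| + M sum_{j <= i < j+N0} |c_i| over m <= j <= k upgrades this to k c_k -> 0. *)

lemma sum_sin_telescope:
  "2 * sin (x/2) * (\<Sum>j<k. sin (real j * x)) = cos (x/2) - cos (real k * x - x/2)"
proof (induction k)
  case (Suc k)
  have "2 * sin (x/2) * (\<Sum>j<Suc k. sin (real j * x))
      = cos (x/2) - cos (real k * x - x/2) + 2 * sin (x/2) * sin (real k * x)"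
    using Suc by (simp add: algebra_simps)
  also have "\<dots> = cos (x/2) - cos (real (Suc k) * x - x/2)"
    by (simp add: cos_add cos_diff algebra_simps)
  finally show ?case .
qed simp

lemma abs_sum_sin_le:
  assumes "sin (x/2) \<noteq> 0"
  shows "\<bar>\<Sum>j<k. sin (real j * x)\<bar> \<le> 1 / \<bar>sin (x/2)\<bar>"
proof -
  have "\<bar>2 * sin (x/2) * (\<Sum>j<k. sin (real j * x))\<bar> \<le> 2"
    unfolding sum_sin_telescope
    using abs_cos_le_one[of "x/2"] abs_cos_le_one[of "real k * x - x/2"] by linarith
  then show ?thesis
    using assms by (simp add: abs_mult field_simps)
qed

lemma abs_sin_mult_le: "\<bar>sin (real k * x)\<bar> \<le> real k * \<bar>sin x\<bar>"
proof (induction k)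
  case (Suc k)
  have "sin (real (Suc k) * x) = sin (real k * x) * cos x + cos (real k * x) * sin x"
    by (simp add: distrib_right sin_add)
  then have "\<bar>sin (real (Suc k) * x)\<bar>
      \<le> \<bar>sin (real k * x)\<bar> * \<bar>cos x\<bar> + \<bar>cos (real k * x)\<bar> * \<bar>sin x\<bar>"
    by (simp add: abs_mult[symmetric])
  also have "\<dots> \<le> \<bar>sin (real k * x)\<bar> + \<bar>sin x\<bar>"
    by (intro add_mono mult_left_le mult_left_le_one_le) auto
  finally show ?case
    using Suc by (simp add: algebra_simps)
qed simp

lemma abs_sin_le_abs_sin_half: "\<bar>sin (x::real)\<bar> \<le> 2 * \<bar>sin (x/2)\<bar>"
proof -
  have "\<bar>sin x\<bar> = 2 * \<bar>sin (x/2)\<bar> * \<bar>cos (x/2)\<bar>"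
    using sin_double[of "x/2"] by (simp add: abs_mult)
  also have "\<dots> \<le> 2 * \<bar>sin (x/2)\<bar>"
    by (intro mult_left_le) auto
  finally show ?thesis .
qed

lemma abs_sin_mult_le_sin_half: "\<bar>sin (real k * x)\<bar> \<le> 2 * real k * \<bar>sin (x/2)\<bar>"
  using abs_sin_mult_le[of k x] mult_left_mono[OF abs_sin_le_abs_sin_half[of x], of "real k"]
  by simp

lemma sin_ge_half_on_block:
  assumes "1 \<le> m" "m \<le> j" "j \<le> 2 * m"
  shows "1/2 \<le> sin (real j * (pi / (4 * real m)))"
proof -
  have "pi/4 \<le> real j * (pi / (4 * real m))" "real j * (pi / (4 * real m)) \<le> pi/2"
    using assms by (auto simp: field_simps)
  then have "sin (pi/4) \<le> sin (real j * (pi / (4 * real m)))"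
    using pi_gt_zero by (intro sin_mono_le_eq[THEN iffD2]) linarith+
  moreover have "1/2 \<le> sqrt 2 / 2"
    by simp
  ultimately show ?thesis
    unfolding sin_45 by linarith
qed

lemma sum_scaleR_by_parts:
  fixes u :: "nat \<Rightarrow> 'a::real_normed_vector"
  assumes "p \<le> q"
  shows "(\<Sum>k\<in>{p..<q}. (w (Suc k) - w k) *\<^sub>R u k) =
    w q *\<^sub>R u q - w p *\<^sub>R u p - (\<Sum>k\<in>{p..<q}. w (Suc k) *\<^sub>R (u (Suc k) - u k))"
proof -
  have "(\<Sum>k\<in>{p..<q}. (w (Suc k) - w k) *\<^sub>R u k) + (\<Sum>k\<in>{p..<q}. w (Suc k) *\<^sub>R (u (Suc k) - u k))
     = (\<Sum>k\<in>{p..<q}. w (Suc k) *\<^sub>R u (Suc k) - w k *\<^sub>R u k)"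
    by (simp add: sum.distrib[symmetric] algebra_simps)
  also have "\<dots> = w q *\<^sub>R u q - w p *\<^sub>R u p"
    by (rule sum_Suc_diff'[OF assms])
  finally show ?thesis
    by (simp add: algebra_simps)
qed

lemma norm_sum_sin_scaleR_le:
  fixes d :: "nat \<Rightarrow> 'a::real_normed_vector"
  assumes "sin (x/2) \<noteq> 0" "p \<le> q"
  shows "norm (\<Sum>k\<in>{p..<q}. sin (real k * x) *\<^sub>R d k)
    \<le> (norm (d p) + norm (d q) + (\<Sum>k\<in>{p..<q}. norm (d k - d (Suc k)))) / \<bar>sin (x/2)\<bar>"
proof -
  define W where "W k = (\<Sum>j<k. sin (real j * x))" for k
  define s where "s = 1 / \<bar>sin (x/2)\<bar>"
  have W: "\<bar>W k\<bar> \<le> s" for k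
    unfolding W_def s_def using abs_sum_sin_le[OF assms(1)] .
  have "(\<Sum>k\<in>{p..<q}. sin (real k * x) *\<^sub>R d k) =
      W q *\<^sub>R d q - W p *\<^sub>R d p - (\<Sum>k\<in>{p..<q}. W (Suc k) *\<^sub>R (d (Suc k) - d k))"
    using sum_scaleR_by_parts[OF assms(2), of W d] by (simp add: W_def)
  also have "norm \<dots> \<le> \<bar>W q\<bar> * norm (d q) + \<bar>W p\<bar> * norm (d p)
      + (\<Sum>k\<in>{p..<q}. \<bar>W (Suc k)\<bar> * norm (d k - d (Suc k)))"
    by (intro order_trans[OF norm_triangle_ineq4] add_mono order_trans[OF norm_sum] sum_mono)
       (auto simp: norm_minus_commute)
  also have "\<dots> \<le> s * norm (d q) + s * norm (d p) + (\<Sum>k\<in>{p..<q}. s * norm (d k - d (Suc k)))"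
    by (intro add_mono sum_mono mult_right_mono W) auto
  finally show ?thesis
    by (simp add: s_def add_divide_distrib sum_divide_distrib add_ac)
qed

(* The GBV hypothesis of the theorem for nat-indexed sequences; N0 \<ge> 1 keeps the Max nonempty. *)
definition gbv :: "nat \<Rightarrow> real \<Rightarrow> (nat \<Rightarrow> 'a::real_normed_vector) \<Rightarrow> bool" where
  "gbv N0 M d \<longleftrightarrow> 1 \<le> N0 \<and> 0 \<le> M \<and>
     (\<forall>m\<ge>1. (\<Sum>n = m..2 * m. norm (d n - d (Suc n)))
        \<le> M * Max ((\<lambda>n. norm (d n)) ` {m..<m + N0}))"

lemma gbv_params:
  assumes "gbv N0 M d"
  shows "1 \<le> N0" "0 \<le> M"
  using assms unfolding gbv_def by blast+

lemma gbv_block_le: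
  assumes "gbv N0 M d" "1 \<le> m" "\<And>n. n \<in> {m..<m + N0} \<Longrightarrow> norm (d n) \<le> B"
  shows "(\<Sum>n = m..2 * m. norm (d n - d (Suc n))) \<le> M * B"
proof -
  have "Max ((\<lambda>n. norm (d n)) ` {m..<m + N0}) \<le> B"
    using gbv_params(1)[OF assms(1)] assms(3) by (subst Max_le_iff) auto
  with assms(1,2) show ?thesis
    unfolding gbv_def by (meson mult_left_mono order_trans)
qed

lemma gbv_variation_tail_le:
  assumes "gbv N0 M d" "1 \<le> p" "\<And>k. p \<le> k \<Longrightarrow> real k * norm (d k) \<le> \<epsilon>"
  shows "(\<Sum>k\<in>{p..<q}. norm (d k - d (Suc k))) \<le> 2 * M * \<epsilon> / real p"
  using assms(2,3)
proof (induction "q - p" arbitrary: p rule: less_induct)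
  case less
  have M: "0 \<le> M"
    by (rule gbv_params(2)[OF assms(1)])
  have \<epsilon>: "0 \<le> \<epsilon>"
    using order_trans[OF _ less.prems(2)[OF order_refl]] by simp
  have small: "norm (d n) \<le> \<epsilon> / real p" if "p \<le> n" for n
  proof -
    have "real p * norm (d n) \<le> real n * norm (d n)"
      using that by (intro mult_right_mono) auto
    with less.prems(2)[OF that] less.prems(1) show ?thesis
      by (simp add: field_simps)
  qed
  have block: "(\<Sum>k\<in>{p..<2 * p + 1}. norm (d k - d (Suc k))) \<le> M * (\<epsilon> / real p)"
    using gbv_block_le[OF assms(1) less.prems(1), of "\<epsilon> / real p"] small
    by (simp add: atLeastLessThanSuc_atLeastAtMost)
  show ?case
  proof (cases "q \<le> 2 * p + 1")
    case True
    then have "(\<Sum>k\<in>{p..<q}. norm (d k - d (Suc k))) \<le> (\<Sum>k\<in>{p..<2 * p + 1}. norm (d k - d (Suc k)))"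
      by (intro sum_mono2) auto
    moreover have "M * (\<epsilon> / real p) \<le> 2 * M * \<epsilon> / real p"
      using M \<epsilon> by (simp add: divide_right_mono mult_left_mono)
    ultimately show ?thesis
      using block by linarith
  next
    case False
    have "(\<Sum>k\<in>{p..<q}. norm (d k - d (Suc k))) = (\<Sum>k\<in>{p..<2 * p + 1}. norm (d k - d (Suc k)))
        + (\<Sum>k\<in>{2 * p + 1..<q}. norm (d k - d (Suc k)))"
      using False by (subst sum.atLeastLessThan_concat) auto
    also have "(\<Sum>k\<in>{2 * p + 1..<q}. norm (d k - d (Suc k))) \<le> 2 * M * \<epsilon> / real (2 * p + 1)"
      using less.hyps[of "2 * p + 1"] less.prems False by simp
    also have "2 * M * \<epsilon> / real (2 * p + 1) \<le> M * (\<epsilon> / real p)"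
      using M \<epsilon> less.prems(1) by (simp add: field_simps)
    finally have "(\<Sum>k\<in>{p..<q}. norm (d k - d (Suc k)))
        \<le> (\<Sum>k\<in>{p..<2 * p + 1}. norm (d k - d (Suc k))) + M * (\<epsilon> / real p)"
      by simp
    moreover have "2 * M * \<epsilon> / real p = M * (\<epsilon> / real p) + M * (\<epsilon> / real p)"
      by simp
    ultimately show ?thesis
      using block by linarith
  qed
qed

lemma norm_sum_sin_scaleR_le_length:
  fixes d :: "nat \<Rightarrow> 'a::real_normed_vector"
  assumes "\<And>k. k \<in> {n..<r} \<Longrightarrow> real k * norm (d k) \<le> \<epsilon>"
  shows "norm (\<Sum>k\<in>{n..<r}. sin (real k * x) *\<^sub>R d k)
    \<le> 2 * \<epsilon> * real (r - n) * \<bar>sin (x/2)\<bar>"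
proof -
  have "norm (sin (real k * x) *\<^sub>R d k) \<le> 2 * \<epsilon> * \<bar>sin (x/2)\<bar>" if "k \<in> {n..<r}" for k
  proof -
    have "norm (sin (real k * x) *\<^sub>R d k) \<le> 2 * real k * \<bar>sin (x/2)\<bar> * norm (d k)"
      using abs_sin_mult_le_sin_half by (simp add: mult_right_mono)
    also have "\<dots> = 2 * \<bar>sin (x/2)\<bar> * (real k * norm (d k))"
      by simp
    also have "\<dots> \<le> 2 * \<bar>sin (x/2)\<bar> * \<epsilon>"
      using assms[OF that] by (intro mult_left_mono) auto
    finally show ?thesis
      by (simp add: mult_ac)
  qed
  then have "norm (\<Sum>k\<in>{n..<r}. sin (real k * x) *\<^sub>R d k)
      \<le> (\<Sum>k\<in>{n..<r}. 2 * \<epsilon> * \<bar>sin (x/2)\<bar>)"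
    by (intro order_trans[OF norm_sum] sum_mono)
  then show ?thesis
    by (simp add: mult_ac)
qed

lemma gbv_sine_sum_high_le:
  assumes "gbv N0 M d" "1 \<le> p" "p \<le> q" "1 \<le> real p * \<bar>sin (x/2)\<bar>"
    and "\<And>k. p \<le> k \<Longrightarrow> real k * norm (d k) \<le> \<epsilon>"
  shows "norm (\<Sum>k\<in>{p..<q}. sin (real k * x) *\<^sub>R d k) \<le> (2 + 2 * M) * \<epsilon>"
proof -
  define s where "s = \<bar>sin (x/2)\<bar>"
  have s: "0 < s"
  proof -
    have "sin (x/2) \<noteq> 0"
      using assms(4) by (metis abs_zero mult_zero_right not_one_le_zero)
    then show ?thesis
      by (simp add: s_def)
  qed
  have \<epsilon>: "0 \<le> \<epsilon>"
    using order_trans[OF _ assms(5)[OF order_refl]] by simp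
  have d: "norm (d k) \<le> \<epsilon> * s" if "p \<le> k" for k
  proof -
    have "real p * s \<le> real k * s"
      using that s by (intro mult_right_mono) auto
    then have "1 \<le> real k * s"
      using assms(4) by (simp add: s_def)
    then have "norm (d k) \<le> (real k * s) * norm (d k)"
      using mult_right_mono[of 1 "real k * s" "norm (d k)"] by simp
    also have "\<dots> = s * (real k * norm (d k))"
      by (simp add: mult_ac)
    also have "\<dots> \<le> s * \<epsilon>"
      using assms(5)[OF that] s by (intro mult_left_mono) auto
    finally show ?thesis
      by (simp add: mult.commute)
  qed
  have "(\<Sum>k\<in>{p..<q}. norm (d k - d (Suc k))) \<le> 2 * M * \<epsilon> / real p"
    by (rule gbv_variation_tail_le[OF assms(1,2,5)])
  also have "\<dots> = 2 * M * \<epsilon> * (1 / real p)"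
    by simp
  also have "\<dots> \<le> 2 * M * \<epsilon> * s"
  proof (rule mult_left_mono)
    show "1 / real p \<le> s"
      using assms(2,4) by (simp add: s_def field_simps)
    show "0 \<le> 2 * M * \<epsilon>"
      using gbv_params(2)[OF assms(1)] \<epsilon> by simp
  qed
  finally have V: "(\<Sum>k\<in>{p..<q}. norm (d k - d (Suc k))) \<le> 2 * M * \<epsilon> * s" .
  have "norm (\<Sum>k\<in>{p..<q}. sin (real k * x) *\<^sub>R d k)
      \<le> (norm (d p) + norm (d q) + (\<Sum>k\<in>{p..<q}. norm (d k - d (Suc k)))) / s"
    using norm_sum_sin_scaleR_le[OF _ assms(3)] s by (auto simp: s_def)
  also have "\<dots> \<le> (\<epsilon> * s + \<epsilon> * s + 2 * M * \<epsilon> * s) / s"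
    using d[of p] d[of q] V assms(3) s by (intro divide_right_mono add_mono) simp_all
  also have "\<dots> = (2 + 2 * M) * \<epsilon>"
    using s by (simp add: field_simps)
  finally show ?thesis .
qed

lemma frequency_cutoff:
  assumes "0 < s" "1 \<le> n"
  obtains p :: nat where "n \<le> p" "1 \<le> real p * s" "real (p - n) * s \<le> 1"
proof -
  define p where "p = max n (nat \<lfloor>1/s\<rfloor> + 1)"
  have "1/s < real (nat \<lfloor>1/s\<rfloor> + 1)"
    by linarith
  also have "\<dots> \<le> real p"
    by (simp add: p_def)
  finally have "1 \<le> real p * s"
    using assms(1) by (simp add: field_simps)
  moreover have "real (p - n) \<le> 1/s"
  proof (cases "p = n")
    case False
    then have "p = nat \<lfloor>1/s\<rfloor> + 1"
      by (auto simp: p_def)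
    then have "real (p - n) \<le> real (nat \<lfloor>1/s\<rfloor>)"
      using assms(2) by simp
    also have "\<dots> \<le> 1/s"
      using assms(1) by simp
    finally show ?thesis .
  qed (use assms(1) in simp)
  then have "real (p - n) * s \<le> 1"
    using assms(1) by (simp add: field_simps)
  ultimately show ?thesis
    using that[of p] by (simp add: p_def)
qed

lemma gbv_sine_sum_tail_le:
  assumes "gbv N0 M d" "1 \<le> n" "\<And>k. n \<le> k \<Longrightarrow> real k * norm (d k) \<le> \<epsilon>"
  shows "norm (\<Sum>k\<in>{n..<q}. sin (real k * x) *\<^sub>R d k) \<le> (4 + 2 * M) * \<epsilon>"
proof -
  have M: "0 \<le> M"
    by (rule gbv_params(2)[OF assms(1)])
  have \<epsilon>: "0 \<le> \<epsilon>"
    using order_trans[OF _ assms(3)[OF order_refl]] by simp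
  define s where "s = \<bar>sin (x/2)\<bar>"
  show ?thesis
  proof (cases "s = 0")
    case True
    then have "sin (real k * x) = 0" for k
      using abs_sin_mult_le_sin_half[of k x] by (simp add: s_def)
    then show ?thesis
      using M \<epsilon> by simp
  next
    case False
    then have s: "0 < s"
      by (simp add: s_def)
    obtain p where p: "n \<le> p" "1 \<le> real p * s" "real (p - n) * s \<le> 1"
      using frequency_cutoff[OF s assms(2)] .
    define r where "r = min p q"
    have "real (r - n) * s \<le> real (p - n) * s"
      using s by (intro mult_right_mono) (auto simp: r_def)
    with p(3) have count: "real (r - n) * s \<le> 1"
      by linarith
    have "norm (\<Sum>k\<in>{n..<r}. sin (real k * x) *\<^sub>R d k) \<le> 2 * \<epsilon> * real (r - n) * s"
      unfolding s_def by (rule norm_sum_sin_scaleR_le_length) (use assms(3) in auto)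
    also have "\<dots> = 2 * \<epsilon> * (real (r - n) * s)"
      by (simp add: mult.assoc)
    also have "\<dots> \<le> 2 * \<epsilon>"
      using count \<epsilon> by (simp add: mult_left_le)
    finally have low: "norm (\<Sum>k\<in>{n..<r}. sin (real k * x) *\<^sub>R d k) \<le> 2 * \<epsilon>" .
    have high: "norm (\<Sum>k\<in>{r..<q}. sin (real k * x) *\<^sub>R d k) \<le> (2 + 2 * M) * \<epsilon>"
    proof (cases "p \<le> q")
      case True
      then show ?thesis
        using gbv_sine_sum_high_le[OF assms(1) _ True, of x \<epsilon>] p assms(2,3)
        by (simp add: r_def s_def)
    qed (use M \<epsilon> r_def in simp)
    have "(\<Sum>k\<in>{n..<q}. sin (real k * x) *\<^sub>R d k) =
        (\<Sum>k\<in>{n..<r}. sin (real k * x) *\<^sub>R d k) + (\<Sum>k\<in>{r..<q}. sin (real k * x) *\<^sub>R d k)"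
      if "n \<le> q"
      using that p by (intro sum.atLeastLessThan_concat[symmetric]) (auto simp: r_def)
    then show ?thesis
      using norm_triangle_le[OF add_mono[OF low high]] M \<epsilon>
      by (cases "n \<le> q") (auto simp: algebra_simps)
  qed
qed

lemma gbv_sine_tail_uniformly_small:
  assumes "gbv N0 M d" "(\<lambda>n. real n *\<^sub>R d n) \<longlonglongrightarrow> 0" "0 < e"
  shows "\<exists>P. \<forall>p\<ge>P. \<forall>q x. norm (\<Sum>k\<in>{p..<q}. sin (real k * x) *\<^sub>R d k) \<le> e"
proof -
  define \<epsilon> where "\<epsilon> = e / (4 + 2 * M)"
  have M: "0 \<le> M"
    by (rule gbv_params(2)[OF assms(1)])
  then have "0 < \<epsilon>"
    using assms(3) by (simp add: \<epsilon>_def)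
  then obtain P where P: "\<And>k. P \<le> k \<Longrightarrow> norm (real k *\<^sub>R d k) < \<epsilon>"
    using LIMSEQ_D[OF assms(2)] by fastforce
  have "norm (\<Sum>k\<in>{p..<q}. sin (real k * x) *\<^sub>R d k) \<le> e" if "Suc P \<le> p" for p q x
  proof -
    have "norm (\<Sum>k\<in>{p..<q}. sin (real k * x) *\<^sub>R d k) \<le> (4 + 2 * M) * \<epsilon>"
      using that P by (intro gbv_sine_sum_tail_le[OF assms(1)]) (auto intro: less_imp_le)
    also have "\<dots> = e"
      using M by (simp add: \<epsilon>_def)
    finally show ?thesis .
  qed
  then show ?thesis
    by blast
qed

lemma gbv_norm_le:
  assumes "gbv N0 M d" "1 \<le> j" "j \<le> k" "k \<le> 2 * j"
  shows "norm (d k) \<le> norm (d j) + M * (\<Sum>i<N0. norm (d (j + i)))"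
proof -
  have "norm (d k - d j) \<le> (\<Sum>i\<in>{j..<k}. norm (d (Suc i) - d i))"
    using sum_Suc_diff'[OF assms(3), of d] norm_sum by metis
  also have "\<dots> = (\<Sum>i\<in>{j..<k}. norm (d i - d (Suc i)))"
    by (simp add: norm_minus_commute)
  also have "\<dots> \<le> (\<Sum>i = j..2 * j. norm (d i - d (Suc i)))"
    using assms(4) by (intro sum_mono2) auto
  also have "\<dots> \<le> M * (\<Sum>i\<in>{j..<j + N0}. norm (d i))"
    using assms(1,2) by (intro gbv_block_le) (auto intro: member_le_sum)
  also have "(\<Sum>i\<in>{j..<j + N0}. norm (d i)) = (\<Sum>i<N0. norm (d (j + i)))"
    by (simp add: sum.atLeastLessThan_shift_0[of _ j] atLeast0LessThan)
  finally show ?thesis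
    using norm_triangle_ineq2[of "d k" "d j"] by linarith
qed

lemma gbv_mult_norm_le_window:
  assumes "gbv N0 M d" "N0 \<le> k"
  shows "real k * norm (d k)
    \<le> 2 * (1 + M * real N0) * (\<Sum>i = k - k div 2..4 * (k - k div 2). norm (d i))"
proof -
  define m where "m = k - k div 2"
  define T where "T = (\<Sum>i = m..4 * m. norm (d i))"
  have M: "0 \<le> M"
    by (rule gbv_params(2)[OF assms(1)])
  have m: "1 \<le> m" "m \<le> k" "k \<le> 2 * m" "k \<le> 2 * (k + 1 - m)"
    using gbv_params(1)[OF assms(1)] assms(2) unfolding m_def by auto
  have window: "(\<Sum>j = m..k. norm (d (j + i))) \<le> T" if "i < N0" for i
  proof -
    have "(\<Sum>j = m..k. norm (d (j + i))) = (\<Sum>j = m + i..k + i. norm (d j))"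
      by (rule sum.shift_bounds_cl_nat_ivl[symmetric])
    also have "\<dots> \<le> T"
      unfolding T_def using that assms(2) m by (intro sum_mono2) auto
    finally show ?thesis .
  qed
  have "real (k + 1 - m) * norm (d k) = (\<Sum>j = m..k. norm (d k))"
    by simp
  also have "\<dots> \<le> (\<Sum>j = m..k. norm (d j) + M * (\<Sum>i<N0. norm (d (j + i))))"
    using m by (intro sum_mono gbv_norm_le[OF assms(1)]) auto
  also have "\<dots> = (\<Sum>j = m..k. norm (d j)) + M * (\<Sum>i<N0. \<Sum>j = m..k. norm (d (j + i)))"
    by (simp add: sum.distrib sum_distrib_left sum.swap[of _ "{m..k}"])
  also have "\<dots> \<le> T + M * (\<Sum>i<N0. T)"
    using m M window unfolding T_def by (intro add_mono mult_left_mono sum_mono sum_mono2) auto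
  also have "\<dots> = (1 + M * real N0) * T"
    by (simp add: algebra_simps)
  finally have "real (k + 1 - m) * norm (d k) \<le> (1 + M * real N0) * T" .
  moreover have "real k * norm (d k) \<le> 2 * real (k + 1 - m) * norm (d k)"
    using mult_right_mono[OF of_nat_mono[OF m(4)] norm_ge_zero] by simp
  ultimately show ?thesis
    unfolding T_def m_def by linarith
qed

lemma sum_atLeastAtMost_le_split:
  fixes f :: "nat \<Rightarrow> real"
  assumes "a \<le> b" "b \<le> c" "\<And>i. 0 \<le> f i"
  shows "(\<Sum>i = a..c. f i) \<le> (\<Sum>i = a..b. f i) + (\<Sum>i = b..c. f i)"
proof -
  have "(\<Sum>i = a..c. f i) \<le> (\<Sum>i \<in> {a..b} \<union> {b..c}. f i)"
    using assms by (intro sum_mono2) auto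
  also have "\<dots> \<le> (\<Sum>i = a..b. f i) + (\<Sum>i = b..c. f i)"
    using assms(3) by (simp add: sum_Un sum_nonneg)
  finally show ?thesis .
qed

lemma filterlim_sequentially_diff_half: "filterlim (\<lambda>k::nat. k - k div 2) sequentially sequentially"
  unfolding filterlim_at_top eventually_sequentially
proof
  fix Z :: nat
  show "\<exists>N. \<forall>k\<ge>N. Z \<le> k - k div 2"
    by (intro exI[of _ "2 * Z"] allI impI) presburger
qed

lemma gbv_tendsto_zero:
  assumes "gbv N0 M d" "(\<lambda>m. \<Sum>i = m..2 * m. norm (d i)) \<longlonglongrightarrow> 0"
  shows "(\<lambda>n. real n *\<^sub>R d n) \<longlonglongrightarrow> 0"
proof -
  define B where "B m = (\<Sum>i = m..2 * m. norm (d i))" for m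
  define C where "C = 2 * (1 + M * real N0)"
  have window_le: "(\<Sum>i = m..4 * m. norm (d i)) \<le> B m + B (2 * m)" for m
    using sum_atLeastAtMost_le_split[of m "2 * m" "4 * m" "\<lambda>i. norm (d i)"]
    by (simp add: B_def mult.assoc[symmetric])
  have B: "B \<longlonglongrightarrow> 0"
    using assms(2) unfolding B_def[abs_def] .
  moreover have "(\<lambda>m. B (2 * m)) \<longlonglongrightarrow> 0"
    using LIMSEQ_subseq_LIMSEQ[OF B, of "(*) 2"] by (simp add: strict_mono_def o_def)
  ultimately have "(\<lambda>k. C * (B (k - k div 2) + B (2 * (k - k div 2)))) \<longlonglongrightarrow> 0"
    using filterlim_compose[OF _ filterlim_sequentially_diff_half]
    by (intro tendsto_mult_right_zero tendsto_add_zero) auto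
  moreover have "\<forall>\<^sub>F k in sequentially.
      norm (real k *\<^sub>R d k) \<le> C * (B (k - k div 2) + B (2 * (k - k div 2)))"
    unfolding eventually_sequentially
  proof (intro exI allI impI)
    fix k assume "N0 \<le> k"
    have "0 \<le> C"
      using gbv_params(2)[OF assms(1)] by (simp add: C_def)
    then have "C * (\<Sum>i = k - k div 2..4 * (k - k div 2). norm (d i))
        \<le> C * (B (k - k div 2) + B (2 * (k - k div 2)))"
      by (intro mult_left_mono window_le)
    then show "norm (real k *\<^sub>R d k) \<le> C * (B (k - k div 2) + B (2 * (k - k div 2)))"
      using gbv_mult_norm_le_window[OF assms(1) \<open>N0 \<le> k\<close>] by (simp add: C_def)
  qed
  ultimately show ?thesis
    by (rule Lim_null_comparison[rotated])
qed

lemma sector_cos_mult_norm_le_Re: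
  assumes "z \<in> sector \<theta>" "\<theta> < pi/2"
  shows "cos \<theta> * cmod z \<le> Re z"
proof (cases "z = 0")
  case False
  have "\<bar>Arg z\<bar> \<le> \<theta>"
    using assms(1) unfolding sector_def by auto
  then have "cos \<theta> \<le> cos \<bar>Arg z\<bar>"
    using assms(2) by (intro cos_monotone_0_pi_le) auto
  also have "cos \<bar>Arg z\<bar> = Re z / cmod z"
    using cos_Arg[OF False] by (simp add: abs_if)
  finally show ?thesis
    using False by (simp add: field_simps)
qed simp

lemma summable_norm_sector:
  assumes "summable a" "\<And>k. a k \<in> sector \<theta>" "0 \<le> \<theta>" "\<theta> < pi/2"
  shows "summable (\<lambda>k. cmod (a k))"
proof (rule summable_comparison_test)
  have "0 < cos \<theta>"
    using assms(3,4) by (intro cos_gt_zero_pi) auto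
  then show "\<exists>N. \<forall>k\<ge>N. norm (cmod (a k)) \<le> Re (a k) / cos \<theta>"
    using sector_cos_mult_norm_le_Re[OF assms(2,4)] by (auto simp: field_simps)
  show "summable (\<lambda>k. Re (a k) / cos \<theta>)"
    using summable_Re[OF assms(1)] by (rule summable_divide)
qed

lemma sector_weighted_sum_le:
  assumes "\<And>k. k \<in> A \<Longrightarrow> z k \<in> sector \<theta>" "\<And>k. k \<in> A \<Longrightarrow> 0 \<le> w k"
    and "\<theta> < pi/2"
  shows "cos \<theta> * (\<Sum>k\<in>A. w k * cmod (z k)) \<le> cmod (\<Sum>k\<in>A. w k *\<^sub>R z k)"
proof -
  have "cos \<theta> * (\<Sum>k\<in>A. w k * cmod (z k)) = (\<Sum>k\<in>A. w k * (cos \<theta> * cmod (z k)))"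
    by (simp add: sum_distrib_left mult_ac)
  also have "\<dots> \<le> (\<Sum>k\<in>A. w k * Re (z k))"
    using assms by (intro sum_mono mult_left_mono sector_cos_mult_norm_le_Re) auto
  also have "\<dots> = Re (\<Sum>k\<in>A. w k *\<^sub>R z k)"
    by simp
  also have "\<dots> \<le> cmod (\<Sum>k\<in>A. w k *\<^sub>R z k)"
    by (rule complex_Re_le_cmod)
  finally show ?thesis .
qed

lemma sector_block_sum_le_sine_sum:
  assumes "1 \<le> m" "\<And>k. k \<in> {m..2 * m} \<Longrightarrow> b k \<in> sector \<theta>"
    and "0 \<le> \<theta>" "\<theta> < pi/2"
  shows "cos \<theta> / 2 * (\<Sum>k = m..2 * m. cmod (b k))
    \<le> cmod (\<Sum>k = m..2 * m. sin (real k * (pi / (4 * real m))) *\<^sub>R b k)"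
proof -
  define x where "x = pi / (4 * real m)"
  have sin: "1/2 \<le> sin (real k * x)" if "k \<in> {m..2 * m}" for k
    unfolding x_def using that assms(1) by (intro sin_ge_half_on_block) auto
  have "0 \<le> cos \<theta>"
    using assms(3,4) by (intro cos_ge_zero) auto
  have "cos \<theta> / 2 * cmod (b k) \<le> cos \<theta> * (sin (real k * x) * cmod (b k))"
    if "k \<in> {m..2 * m}" for k
  proof -
    have "1/2 * cmod (b k) \<le> sin (real k * x) * cmod (b k)"
      using sin[OF that] by (rule mult_right_mono) simp
    then show ?thesis
      using mult_left_mono[OF _ \<open>0 \<le> cos \<theta>\<close>] by fastforce
  qed
  then have "cos \<theta> / 2 * (\<Sum>k = m..2 * m. cmod (b k))
      \<le> cos \<theta> * (\<Sum>k = m..2 * m. sin (real k * x) * cmod (b k))"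
    unfolding sum_distrib_left by (rule sum_mono)
  also have "\<dots> \<le> cmod (\<Sum>k = m..2 * m. sin (real k * x) *\<^sub>R b k)"
    using sin assms(2,4) by (intro sector_weighted_sum_le) (auto intro: order_trans[of 0 "1/2"])
  finally show ?thesis
    unfolding x_def .
qed

lemma summable_block_sums_tendsto_zero:
  fixes f :: "nat \<Rightarrow> 'a::real_normed_vector"
  assumes "summable (\<lambda>k. norm (f k))"
  shows "(\<lambda>m. \<Sum>k = m..2 * m. norm (f k)) \<longlonglongrightarrow> 0"
proof (rule LIMSEQ_I)
  fix e :: real assume "0 < e"
  then obtain N where "\<And>m n. N \<le> m \<Longrightarrow> norm (\<Sum>k\<in>{m..<n}. norm (f k)) < e"
    using assms unfolding summable_Cauchy by blast
  then have "norm (\<Sum>k\<in>{m..<Suc (2 * m)}. norm (f k)) < e" if "N \<le> m" for m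
    using that by blast
  then show "\<exists>N. \<forall>m\<ge>N. norm ((\<Sum>k = m..2 * m. norm (f k)) - 0) < e"
    by (auto simp: atLeastLessThanSuc_atLeastAtMost)
qed

definition sym_term :: "(int \<Rightarrow> complex) \<Rightarrow> nat \<Rightarrow> real \<Rightarrow> complex" where
  "sym_term c k x =
     c (int k) * exp (\<i> * of_nat k * of_real x) + c (- int k) * exp (- (\<i> * of_nat k * of_real x))"

lemma partial_sum_Suc: "partial_sum c (Suc n) x = partial_sum c n x + sym_term c (Suc n) x"
proof -
  have "{- int (Suc n)..int (Suc n)} = insert (- int (Suc n)) (insert (int (Suc n)) {- int n..int n})"
    by auto
  then show ?thesis
    unfolding partial_sum_def sym_term_def by (simp add: algebra_simps)
qed

lemma partial_sum_eq_sum_sym_term: "partial_sum c n x = c 0 + (\<Sum>k<n. sym_term c (Suc k) x)"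
  by (induction n) (simp_all add: partial_sum_Suc, simp add: partial_sum_def)

lemma partial_sum_diff:
  "m \<le> n \<Longrightarrow> partial_sum c n x - partial_sum c m x = (\<Sum>k\<in>{m..<n}. sym_term c (Suc k) x)"
  unfolding partial_sum_eq_sum_sym_term
  by (simp add: sum_diff_nat_ivl[of 0 m n, symmetric] lessThan_atLeast0)

lemma exp_i_minus_exp_minus_i: "exp (\<i> * of_real t) - exp (- (\<i> * of_real t)) = 2 * \<i> * of_real (sin t)"
  by (simp add: sin_exp_eq[of "of_real t"] sin_of_real[symmetric])

lemma sym_term_eq:
  "sym_term c k x = (c (int k) + c (- int k)) * exp (- (\<i> * of_nat k * of_real x))
     + 2 * \<i> * (sin (real k * x) *\<^sub>R c (int k))"
proof -
  have "sym_term c k x = (c (int k) + c (- int k)) * exp (- (\<i> * of_real (real k * x)))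
     + c (int k) * (exp (\<i> * of_real (real k * x)) - exp (- (\<i> * of_real (real k * x))))"
    unfolding sym_term_def by (simp add: algebra_simps)
  then show ?thesis
    by (simp only: exp_i_minus_exp_minus_i) (simp add: scaleR_conv_of_real algebra_simps)
qed

lemma sym_term_odd_part:
  "sym_term c k x - sym_term c k (-x) = 2 * \<i> * (sin (real k * x) *\<^sub>R (c (int k) - c (- int k)))"
proof -
  have "sym_term c k x - sym_term c k (-x) = (c (int k) - c (- int k))
      * (exp (\<i> * of_real (real k * x)) - exp (- (\<i> * of_real (real k * x))))"
    unfolding sym_term_def by (simp add: algebra_simps)
  then show ?thesis
    by (simp only: exp_i_minus_exp_minus_i) (simp add: scaleR_conv_of_real algebra_simps)
qed

lemma partial_sum_odd_part_diff:
  assumes "m \<le> n"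
  shows "(partial_sum c n x - partial_sum c m x) - (partial_sum c n (-x) - partial_sum c m (-x))
    = 2 * \<i> * (\<Sum>k = Suc m..n. sin (real k * x) *\<^sub>R (c (int k) - c (- int k)))"
proof -
  have "(\<Sum>k = Suc m..n. sin (real k * x) *\<^sub>R (c (int k) - c (- int k)))
      = (\<Sum>k\<in>{m..<n}. sin (real (Suc k) * x) *\<^sub>R (c (int (Suc k)) - c (- int (Suc k))))"
    using sum.shift_bounds_cl_Suc_ivl[of _ m "n - 1"] assms
    by (cases n) (auto simp: atLeastLessThanSuc_atLeastAtMost simp del: of_nat_Suc)
  then show ?thesis
    using assms
    by (simp add: partial_sum_diff sum_subtractf[symmetric] sym_term_odd_part sum_distrib_left
        del: of_nat_Suc)
qed

lemma norm_partial_sum_diff_le: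
  assumes "m \<le> n"
  shows "cmod (partial_sum c n x - partial_sum c m x)
    \<le> (\<Sum>k\<in>{m..<n}. cmod (c (int (Suc k)) + c (- int (Suc k))))
      + 2 * cmod (\<Sum>k\<in>{Suc m..<Suc n}. sin (real k * x) *\<^sub>R c (int k))"
proof -
  have "partial_sum c n x - partial_sum c m x =
      (\<Sum>k\<in>{m..<n}. (c (int (Suc k)) + c (- int (Suc k))) * exp (- (\<i> * of_nat (Suc k) * of_real x)))
      + 2 * \<i> * (\<Sum>k\<in>{Suc m..<Suc n}. sin (real k * x) *\<^sub>R c (int k))"
    unfolding partial_sum_diff[OF assms] sym_term_eq sum.shift_bounds_Suc_ivl
    by (simp add: sum.distrib sum_distrib_left del: of_nat_Suc)
  also have "cmod \<dots> \<le> (\<Sum>k\<in>{m..<n}. cmod (c (int (Suc k)) + c (- int (Suc k))))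
      + 2 * cmod (\<Sum>k\<in>{Suc m..<Suc n}. sin (real k * x) *\<^sub>R c (int k))"
    by (intro order_trans[OF norm_triangle_ineq] add_mono order_trans[OF norm_sum])
       (simp_all add: norm_mult del: of_nat_Suc)
  finally show ?thesis .
qed

lemma partial_sum_periodic: "partial_sum c n (x + 2 * pi) = partial_sum c n x"
proof -
  have "exp (\<i> * of_int k * of_real (x + 2 * pi)) = exp (\<i> * of_int k * of_real x)" for k :: int
  proof -
    have "\<i> * of_int k * of_real (x + 2 * pi) = (2 * of_int k * of_real pi) * \<i> + \<i> * of_int k * of_real x"
      by (simp add: algebra_simps)
    then show ?thesis
      using exp_integer_2pi[of "of_int k"] by (simp add: exp_add)
  qed
  then show ?thesis
    unfolding partial_sum_def by simp
qed

lemma continuous_on_partial_sum: "continuous_on UNIV (partial_sum c n)"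
  unfolding partial_sum_def by (intro continuous_intros)

lemma summable_sym_sum_of_convergent_at_zero:
  assumes "convergent (\<lambda>n. partial_sum c n 0)"
  shows "summable (\<lambda>k. c (int (Suc k)) + c (- int (Suc k)))"
proof -
  have "convergent (\<lambda>n. partial_sum c n 0 - c 0)"
    using assms by (intro convergent_diff convergent_const)
  moreover have "sym_term c k 0 = c (int k) + c (- int k)" for k
    by (simp add: sym_term_def)
  ultimately show ?thesis
    unfolding summable_iff_convergent by (simp add: partial_sum_eq_sum_sym_term)
qed

lemma antisym_block_sums_tendsto_zero:
  assumes "uniformly_Cauchy_on UNIV (partial_sum c)"
    and "\<And>k. 1 \<le> k \<Longrightarrow> c (int k) - c (- int k) \<in> sector \<theta>" "0 \<le> \<theta>" "\<theta> < pi/2"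
  shows "(\<lambda>m. \<Sum>k = m..2 * m. cmod (c (int k) - c (- int k))) \<longlonglongrightarrow> 0"
proof (rule LIMSEQ_I)
  fix e :: real assume "0 < e"
  define g where "g = cos \<theta>"
  have "0 < g"
    unfolding g_def using assms(3,4) by (intro cos_gt_zero_pi) auto
  then obtain N where N: "\<And>x m n. N \<le> m \<Longrightarrow> N \<le> n
      \<Longrightarrow> dist (partial_sum c m x) (partial_sum c n x) < g * e / 4"
    using assms(1) \<open>0 < e\<close> unfolding uniformly_Cauchy_on_def
    by (metis UNIV_I divide_pos_pos mult_pos_pos zero_less_numeral)
  have "(\<Sum>k = m..2 * m. cmod (c (int k) - c (- int k))) < e" if "Suc N \<le> m" for m
  proof -
    define x where "x = pi / (4 * real m)"
    define S where "S = (\<Sum>k = m..2 * m. sin (real k * x) *\<^sub>R (c (int k) - c (- int k)))"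
    have lower: "g / 2 * (\<Sum>k = m..2 * m. cmod (c (int k) - c (- int k))) \<le> cmod S"
      unfolding g_def S_def x_def using that assms(2)
      by (intro sector_block_sum_le_sine_sum assms(3,4)) auto
    have "2 * cmod S = cmod ((partial_sum c (2 * m) x - partial_sum c (m - 1) x)
        - (partial_sum c (2 * m) (-x) - partial_sum c (m - 1) (-x)))"
      using partial_sum_odd_part_diff[of "m - 1" "2 * m" c x] that by (simp add: S_def norm_mult)
    also have "\<dots> \<le> cmod (partial_sum c (2 * m) x - partial_sum c (m - 1) x)
        + cmod (partial_sum c (2 * m) (-x) - partial_sum c (m - 1) (-x))"
      by (rule norm_triangle_ineq4)
    also have "\<dots> < g * e / 4 + g * e / 4"
      using N[of "2 * m" "m - 1"] that by (intro add_strict_mono) (auto simp: dist_norm)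
    finally have upper: "2 * cmod S < g * e / 4 + g * e / 4" .
    have "g * (\<Sum>k = m..2 * m. cmod (c (int k) - c (- int k))) \<le> 2 * cmod S"
      using lower by simp
    also have "\<dots> < g * e"
      using upper mult_pos_pos[OF \<open>0 < g\<close> \<open>0 < e\<close>] by linarith
    finally show ?thesis
      using \<open>0 < g\<close> by simp
  qed
  then show "\<exists>N. \<forall>m\<ge>N. norm ((\<Sum>k = m..2 * m. cmod (c (int k) - c (- int k))) - 0) < e"
    by (auto simp: sum_nonneg)
qed

lemma coeff_conditions_of_uniform_convergence:
  assumes "0 \<le> \<theta>" "\<theta> < pi/2"
    and "\<And>n::int. 1 \<le> n \<Longrightarrow> c n + c (- n) \<in> sector \<theta> \<and> c n - c (- n) \<in> sector \<theta>"
    and "gbv N0 M (\<lambda>n. c (int n))"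
    and "convergent (\<lambda>n. partial_sum c n 0)" "uniformly_Cauchy_on UNIV (partial_sum c)"
  shows "(\<lambda>n. of_nat n * c (int n)) \<longlonglongrightarrow> 0"
    and "summable (\<lambda>n. cmod (c (int (Suc n)) + c (- int (Suc n))))"
proof -
  define a where "a k = c (int k) + c (- int k)" for k
  define b where "b k = c (int k) - c (- int k)" for k
  have "c (int (Suc k)) + c (- int (Suc k)) \<in> sector \<theta>" for k
    using assms(3)[of "int (Suc k)"] by simp
  then show sum_a: "summable (\<lambda>n. cmod (c (int (Suc n)) + c (- int (Suc n))))"
    using summable_norm_sector[OF summable_sym_sum_of_convergent_at_zero[OF assms(5)] _ assms(1,2)]
    by blast
  have "summable (\<lambda>k. cmod (a (Suc k)))"
    using sum_a by (simp add: a_def)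
  then have "(\<lambda>m. \<Sum>k = m..2 * m. cmod (a k)) \<longlonglongrightarrow> 0"
    using summable_Suc_iff summable_block_sums_tendsto_zero by blast
  moreover have "(\<lambda>m. \<Sum>k = m..2 * m. cmod (b k)) \<longlonglongrightarrow> 0"
    unfolding b_def using assms(3) by (intro antisym_block_sums_tendsto_zero[OF assms(6) _ assms(1,2)]) simp
  ultimately have ab:
      "(\<lambda>m. ((\<Sum>k = m..2 * m. cmod (a k)) + (\<Sum>k = m..2 * m. cmod (b k))) / 2) \<longlonglongrightarrow> 0"
    by (intro tendsto_divide_zero tendsto_add_zero)
  have c_le: "cmod (c (int k)) \<le> (cmod (a k) + cmod (b k)) / 2" for k
    using norm_triangle_ineq[of "a k" "b k"] by (simp add: a_def b_def)
  have bound: "norm (\<Sum>k = m..2 * m. cmod (c (int k)))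
      \<le> ((\<Sum>k = m..2 * m. cmod (a k)) + (\<Sum>k = m..2 * m. cmod (b k))) / 2" for m
  proof -
    have "norm (\<Sum>k = m..2 * m. cmod (c (int k))) = (\<Sum>k = m..2 * m. cmod (c (int k)))"
      by (simp add: sum_nonneg)
    also have "\<dots> \<le> (\<Sum>k = m..2 * m. (cmod (a k) + cmod (b k)) / 2)"
      by (intro sum_mono c_le)
    also have "\<dots> = ((\<Sum>k = m..2 * m. cmod (a k)) + (\<Sum>k = m..2 * m. cmod (b k))) / 2"
      by (simp only: sum_divide_distrib[symmetric] sum.distrib)
    finally show ?thesis .
  qed
  have "(\<lambda>m. \<Sum>k = m..2 * m. norm (c (int k))) \<longlonglongrightarrow> 0"
    by (rule Lim_null_comparison[OF always_eventually[OF allI] ab]) (rule bound)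
  then have "(\<lambda>n. real n *\<^sub>R c (int n)) \<longlonglongrightarrow> 0"
    by (rule gbv_tendsto_zero[OF assms(4)])
  then show "(\<lambda>n. of_nat n * c (int n)) \<longlonglongrightarrow> 0"
    by (simp add: scaleR_conv_of_real)
qed

lemma uniformly_Cauchy_partial_sum:
  assumes "gbv N0 M (\<lambda>n. c (int n))"
    and "(\<lambda>n. of_nat n * c (int n)) \<longlonglongrightarrow> 0"
    and "summable (\<lambda>n. cmod (c (int (Suc n)) + c (- int (Suc n))))"
  shows "uniformly_Cauchy_on UNIV (partial_sum c)"
proof (rule uniformly_Cauchy_onI')
  fix e :: real assume "0 < e"
  have "(\<lambda>n. real n *\<^sub>R c (int n)) \<longlonglongrightarrow> 0"
    using assms(2) by (simp add: scaleR_conv_of_real)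
  then obtain P where P:
      "\<And>p q x. P \<le> p \<Longrightarrow> cmod (\<Sum>k\<in>{p..<q}. sin (real k * x) *\<^sub>R c (int k)) \<le> e / 4"
    using gbv_sine_tail_uniformly_small[OF assms(1), of "e / 4"] \<open>0 < e\<close> by auto
  obtain N where N:
      "\<And>m n. N \<le> m \<Longrightarrow> norm (\<Sum>k\<in>{m..<n}. cmod (c (int (Suc k)) + c (- int (Suc k)))) < e / 2"
    using assms(3) \<open>0 < e\<close> unfolding summable_Cauchy by (metis half_gt_zero)
  have "dist (partial_sum c m x) (partial_sum c n x) < e" if "P + N \<le> m" "m < n" for m n x
  proof -
    have "dist (partial_sum c m x) (partial_sum c n x)
        \<le> (\<Sum>k\<in>{m..<n}. cmod (c (int (Suc k)) + c (- int (Suc k))))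
          + 2 * cmod (\<Sum>k\<in>{Suc m..<Suc n}. sin (real k * x) *\<^sub>R c (int k))"
      using norm_partial_sum_diff_le[of m n c x] that by (simp add: dist_norm norm_minus_commute)
    also have "\<dots> < e / 2 + 2 * (e / 4)"
      using N[of m n] P[where p = "Suc m" and q = "Suc n" and x = x] that
      by (intro add_less_le_mono) (auto simp: sum_nonneg)
    finally show ?thesis
      by simp
  qed
  then show "\<exists>N. \<forall>x\<in>UNIV. \<forall>m\<ge>N. \<forall>n>m.
      dist (partial_sum c m x) (partial_sum c n x) < e"
    by blast
qed

lemma gbv_of_int_indexed:
  assumes "1 \<le> N0" "0 \<le> M"
    and "\<forall>m::int. m \<ge> 1 \<longrightarrow> (\<Sum>n = m..2 * m. cmod (c n - c (n + 1)))
            \<le> M * Max ((\<lambda>n. cmod (c n)) ` {m..<m + int N0})"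
  shows "gbv N0 M (\<lambda>n. c (int n))"
  unfolding gbv_def
proof (intro conjI allI impI)
  fix m :: nat assume "1 \<le> m"
  have "(\<Sum>n = m..2 * m. cmod (c (int n) - c (int (Suc n))))
      = (\<Sum>n = int m..2 * int m. cmod (c n - c (n + 1)))"
    using sum.reindex[of int "{m..2 * m}" "\<lambda>n. cmod (c n - c (n + 1))"]
    by (simp add: image_int_atLeastAtMost add.commute)
  also have "\<dots> \<le> M * Max ((\<lambda>n. cmod (c n)) ` {int m..<int m + int N0})"
    using assms(3) \<open>1 \<le> m\<close> by auto
  also have "{int m..<int m + int N0} = int ` {m..<m + N0}"
    by (simp add: image_int_atLeastLessThan)
  also have "(\<lambda>n. cmod (c n)) ` int ` {m..<m + N0} = (\<lambda>n. cmod (c (int n))) ` {m..<m + N0}"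
    by (simp add: image_image)
  finally show "(\<Sum>n = m..2 * m. norm (c (int n) - c (int (Suc n))))
      \<le> M * Max ((\<lambda>n. norm (c (int n))) ` {m..<m + N0})"
    by simp
qed (use assms in auto)

theorem theorem1:
  fixes c :: "int \<Rightarrow> complex" and \<theta>0 :: real
  assumes "0 \<le> \<theta>0" and "\<theta>0 < pi / 2"
    and "\<And>n::int. n \<ge> 1 \<Longrightarrow> c n + c (- n) \<in> sector \<theta>0 \<and> c n - c (- n) \<in> sector \<theta>0"
    and "\<exists>N0::nat. N0 \<ge> 1 \<and> (\<exists>M::real. M > 0 \<and>
           (\<forall>m::int. m \<ge> 1 \<longrightarrow>
              (\<Sum>n = m..2 * m. cmod (c n - c (n + 1)))
                \<le> M * Max ((\<lambda>n. cmod (c n)) ` {m..<m + int N0})))"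
  shows "((\<forall>x. convergent (\<lambda>n. partial_sum c n x))
          \<and> continuous_on UNIV (series_fun c)
          \<and> (\<forall>x. series_fun c (x + 2 * pi) = series_fun c x)
          \<and> uniform_limit UNIV (partial_sum c) (series_fun c) sequentially)
     \<longleftrightarrow>
         ((\<lambda>n. of_nat n * c (int n)) \<longlonglongrightarrow> 0
          \<and> summable (\<lambda>n. cmod (c (int (Suc n)) + c (- int (Suc n)))))"
proof -
  obtain N0 M where gbv: "gbv N0 M (\<lambda>n. c (int n))"
    using assms(4) gbv_of_int_indexed less_imp_le by blast
  have series_fun: "series_fun c = (\<lambda>x. lim (\<lambda>n. partial_sum c n x))"
    by (simp add: series_fun_def fun_eq_iff)
  show ?thesis
  proof (intro iffI conjI)
    assume "(\<forall>x. convergent (\<lambda>n. partial_sum c n x)) \<and> continuous_on UNIV (series_fun c)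
      \<and> (\<forall>x. series_fun c (x + 2 * pi) = series_fun c x)
      \<and> uniform_limit UNIV (partial_sum c) (series_fun c) sequentially"
    then have conv: "convergent (\<lambda>n. partial_sum c n 0)"
      and "uniformly_convergent_on UNIV (partial_sum c)"
      unfolding uniformly_convergent_on_def by blast+
    then have Cauchy: "uniformly_Cauchy_on UNIV (partial_sum c)"
      by (intro uniformly_convergent_Cauchy)
    show "(\<lambda>n. of_nat n * c (int n)) \<longlonglongrightarrow> 0"
      by (rule coeff_conditions_of_uniform_convergence(1)[OF assms(1,2) _ gbv conv Cauchy])
         (simp add: assms(3))
    show "summable (\<lambda>n. cmod (c (int (Suc n)) + c (- int (Suc n))))"
      by (rule coeff_conditions_of_uniform_convergence(2)[OF assms(1,2) _ gbv conv Cauchy])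
         (simp add: assms(3))
  next
    assume "(\<lambda>n. of_nat n * c (int n)) \<longlonglongrightarrow> 0
      \<and> summable (\<lambda>n. cmod (c (int (Suc n)) + c (- int (Suc n))))"
    then have "uniformly_Cauchy_on UNIV (partial_sum c)"
      using uniformly_Cauchy_partial_sum[OF gbv] by blast
    then show limit: "uniform_limit UNIV (partial_sum c) (series_fun c) sequentially"
      unfolding series_fun uniformly_convergent_uniform_limit_iff[symmetric]
      by (rule Cauchy_uniformly_convergent)
    show "\<forall>x. convergent (\<lambda>n. partial_sum c n x)"
      using tendsto_uniform_limitI[OF limit] unfolding convergent_def by blast
    show "continuous_on UNIV (series_fun c)"
      by (rule uniform_limit_theorem[OF _ limit]) (auto simp: continuous_on_partial_sum)
    show "\<forall>x. series_fun c (x + 2 * pi) = series_fun c x"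
      by (simp add: series_fun_def partial_sum_periodic)
  qed
qed

end
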